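(* Let $u,u',v\in\mathbb{Z}^2$ with $u<v$ and $u'<v$ (strictly in both coordinates), and let $\lambda\in(0,1)$. Then $\pi(\lambda;u,v)\cap R=\pi(\lambda;u',v)\cap R$, where $R=R_{u+\mathbf{e}_+,v}\cap R_{u'+\mathbf{e}_+,v}$.
   Context: Fix $p\in(0,1)$; bulk weights $(\omega_x)_{x\in\mathbb{Z}^2}$ i.i.d. with $\mathbb{P}(\omega_x=k)=p(1-p)^k$, $k\ge0$. $\mathbf{e}_1=(1,0),\mathbf{e}_2=(0,1),\mathbf{e}_+=(1,1)$; $R_{u,v}=[u_1,v_1]\times[u_2,v_2]$; $H_x=\mathbb{R}\times\{x_2\}$, $V_x=\{x_1\}\times\mathbb{R}$. Directed paths use steps $\mathbf{e}_1,\mathbf{e}_2$; $T(x,y)$ is the maximal weight $\sum_{z\in\gamma}\omega_z$ over directed paths from $x$ to $y$. Boundary weights for $\lambda\in(0,1)$: let $q(\lambda)=\frac{p\lambda+p\sqrt{(1-p)\lambda(1-\lambda)}}{1-p+p\lambda+2\sqrt{(1-p)\lambda(1-\lambda)}}$, $p_V=1-\frac{1-p}{1-q(\lambda)}$. For a base vertex $u_0$, take $(\omega^V_{u_0+j\mathbf{e}_2}(\lambda))_{j\in\mathbb{Z}}$ i.i.d. geometric with parameter $p_V$ independent of the bulk, set $L(u_0)=0$, $L(u_0+j\mathbf{e}_2)-L(u_0+(j-1)\mathbf{e}_2)=\omega^V_{u_0+j\mathbf{e}_2}(\lambda)$, for $x\in u_0+\mathbb{Z}_{>0}\times\mathbb{Z}$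 let $L(x)=\sup_{j\le x_2-(u_0)_2}[L(u_0+j\mathbf{e}_2)+T(u_0+\mathbf{e}_1+j\mathbf{e}_2,x)]$, and $\omega^H_x(\lambda)=L(x)-L(x-\mathbf{e}_1)$, $\omega^V_x(\lambda)=L(x)-L(x-\mathbf{e}_2)$. The law of $(\omega_x,\omega^H_x(\lambda),\omega^V_x(\lambda))$ converges as $u_0=(-m,-m)$, $m\to\infty$, to a law on all of $\mathbb{Z}^2$ whose restriction to each quadrant $u_0+\mathbb{Z}_{\ge0}^2$ agrees with the construction based at $u_0$; we work under this full-plane law. For a directed path $\gamma$ from $x$ to $y$, $T(\lambda;\gamma)=\sum_{z\in\gamma\cap H_x\setminus\{x\}}\omega^H_z(\lambda)+\sum_{z\in\gamma\cap V_x\setminus\{x\}}\omega^V_z(\lambda)+\sum_{z\in\gamma\cap R_{x+\mathbf{e}_+,y}}\omega_z$; $T(\lambda;x,y)$ is the maximum over directed paths from $x$ to $y$; maximizers are $\lambda$-geodesics, and $\pi(\lambda;x,y)$ is the set of vertices on some $\lambda$-geodesic from $x$ to $y$. *)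

theory Defs
  imports Complex_Main
begin

type_synonym pt = "int \<times> int"

definition e1 :: pt where "e1 = (1, 0)"
definition e2 :: pt where "e2 = (0, 1)"
definition eplus :: pt where "eplus = (1, 1)"

definition padd :: "pt \<Rightarrow> pt \<Rightarrow> pt" where
  "padd a b = (fst a + fst b, snd a + snd b)"
definition psub :: "pt \<Rightarrow> pt \<Rightarrow> pt" where
  "psub a b = (fst a - fst b, snd a - snd b)"

definition pless :: "pt \<Rightarrow> pt \<Rightarrow> bool" where
  "pless u v \<longleftrightarrow> fst u < fst v \<and> snd u < snd v"

definition Rect :: "pt \<Rightarrow> pt \<Rightarrow> pt set" where
  "Rect u v = {z. fst u \<le> fst z \<and> fst z \<le> fst v \<and> snd u \<le> snd z \<and> snd z \<le> snd v}"

definition Hline :: "pt \<Rightarrow> pt set" where "Hline x = {z. snd z = snd x}"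
definition Vline :: "pt \<Rightarrow> pt set" where "Vline x = {z. fst z = fst x}"

definition dpath :: "pt list \<Rightarrow> pt \<Rightarrow> pt \<Rightarrow> bool" where
  "dpath \<gamma> x y \<longleftrightarrow> \<gamma> \<noteq> [] \<and> hd \<gamma> = x \<and> last \<gamma> = y \<and>
     (\<forall>i. Suc i < length \<gamma> \<longrightarrow>
        \<gamma> ! Suc i = padd (\<gamma> ! i) e1 \<or> \<gamma> ! Suc i = padd (\<gamma> ! i) e2)"

definition Tlam_path :: "(pt \<Rightarrow> int) \<Rightarrow> (pt \<Rightarrow> int) \<Rightarrow> (pt \<Rightarrow> nat) \<Rightarrow>
    pt list \<Rightarrow> pt \<Rightarrow> pt \<Rightarrow> int" where
  "Tlam_path wH wV w \<gamma> x y =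
     (\<Sum>z\<in>(set \<gamma> \<inter> Hline x) - {x}. wH z) +
     (\<Sum>z\<in>(set \<gamma> \<inter> Vline x) - {x}. wV z) +
     (\<Sum>z\<in>set \<gamma> \<inter> Rect (padd x eplus) y. int (w z))"

definition lam_geodesic :: "(pt \<Rightarrow> int) \<Rightarrow> (pt \<Rightarrow> int) \<Rightarrow> (pt \<Rightarrow> nat) \<Rightarrow>
    pt list \<Rightarrow> pt \<Rightarrow> pt \<Rightarrow> bool" where
  "lam_geodesic wH wV w \<gamma> x y \<longleftrightarrow> dpath \<gamma> x y \<and>
     (\<forall>\<gamma>'. dpath \<gamma>' x y \<longrightarrow> Tlam_path wH wV w \<gamma>' x y \<le> Tlam_path wH wV w \<gamma> x y)"

definition pi_lam :: "(pt \<Rightarrow> int) \<Rightarrow> (pt \<Rightarrow> int) \<Rightarrow> (pt \<Rightarrow> nat) \<Rightarrow>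
    pt \<Rightarrow> pt \<Rightarrow> pt set" where
  "pi_lam wH wV w x y = {z. \<exists>\<gamma>. lam_geodesic wH wV w \<gamma> x y \<and> z \<in> set \<gamma>}"

text \<open>Structural property of the full-plane stationary LPP (holds surely for the
  quadrant construction and hence a.s. under the full-plane law): the potential L
  satisfies the last-passage recursion L(x) = w_x + max(L(x-e1), L(x-e2)), and the
  boundary weights are its increments.\<close>
definition stationary_lpp :: "(pt \<Rightarrow> nat) \<Rightarrow> (pt \<Rightarrow> int) \<Rightarrow> (pt \<Rightarrow> int) \<Rightarrow> (pt \<Rightarrow> int) \<Rightarrow> bool" where
  "stationary_lpp w L wH wV \<longleftrightarrow>
     (\<forall>x. L x = int (w x) + max (L (psub x e1)) (L (psub x e2))) \<and>
     (\<forall>x. wH x = L x - L (psub x e1)) \<and>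
     (\<forall>x. wV x = L x - L (psub x e2))"

end

theory Submission
  imports Defs "HOL-Library.Product_Order"
begin

(* Inside R_{x,y} every step a -> b of a
   directed path contributes at most L(b) - L(a) to T(lambda; .): on the axes H_x, V_x the
   boundary weight is exactly that increment, and in the bulk omega_b <= L(b) - L(a) because
   L(b) = omega_b + max(L(b - e1), L(b - e2)).  Telescoping gives T(lambda; gamma) <= L(y) - L(x),
   with equality iff every bulk step is optimal, i.e. L(b) = L(a) + omega_b; following optimal
   predecessors backwards from y attains equality.  Hence a bulk vertex z lies on a
   lambda-geodesic from x to y iff some directed path from z to y consists of optimal steps,
   a condition that does not involve x. *)

definition up_step :: "pt \<Rightarrow> pt \<Rightarrow> bool" where
  "up_step a b \<longleftrightarrow> b = padd a e1 \<or> b = padd a e2"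

definition optimal_step :: "(pt \<Rightarrow> int) \<Rightarrow> (pt \<Rightarrow> nat) \<Rightarrow> pt \<Rightarrow> pt \<Rightarrow> bool" where
  "optimal_step L w a b \<longleftrightarrow> L b = L a + int (w b)"

lemma Rect_eq_atLeastAtMost: "Rect x y = {x..y}"
  by (auto simp: Rect_def less_eq_prod_def)

lemma up_step_less: "up_step a b \<Longrightarrow> a < b"
  by (auto simp: up_step_def padd_def e1_def e2_def less_prod_def less_eq_prod_def)

lemma pless_mono: "pless x a \<Longrightarrow> a \<le> b \<Longrightarrow> pless x b"
  by (auto simp: pless_def less_eq_prod_def)

lemma dpath_iff_successively:
  "dpath g x y \<longleftrightarrow> g \<noteq> [] \<and> hd g = x \<and> last g = y \<and> successively up_step g"
  by (simp add: dpath_def successively_conv_nth up_step_def)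

lemma dpath_Cons_iff:
  "dpath (a # g) x y \<longleftrightarrow>
     a = x \<and> (g = [] \<and> x = y \<or> g \<noteq> [] \<and> up_step x (hd g) \<and> dpath g (hd g) y)"
  by (auto simp: dpath_iff_successively successively_Cons)

lemma dpath_append:
  assumes "dpath g x z" "dpath (z # h) z y"
  shows "dpath (g @ h) x y"
  using assms
  by (cases "h = []") (auto simp: dpath_iff_successively successively_append_iff successively_Cons)

lemma dpath_suffix: "dpath (p @ z # s) x y \<Longrightarrow> dpath (z # s) z y"
  by (simp add: dpath_iff_successively successively_append_iff)

lemma dpath_subset_Rect: "dpath g x y \<Longrightarrow> set g \<subseteq> Rect x y"
proof (induction g arbitrary: x)
  case (Cons a g)
  show ?case
  proof (cases "g = []")
    case False
    with Cons have "a = x" "x \<le> hd g" "set g \<subseteq> {hd g..y}"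
      by (auto simp: dpath_Cons_iff Rect_eq_atLeastAtMost dest: up_step_less)
    moreover have "hd g \<in> set g" using False by simp
    ultimately show ?thesis
      unfolding Rect_eq_atLeastAtMost by (force intro: order.trans)
  qed (use Cons.prems in \<open>auto simp: dpath_Cons_iff Rect_def\<close>)
qed simp

lemma dpath_distinct: "dpath g x y \<Longrightarrow> distinct g"
proof (induction g arbitrary: x)
  case (Cons a g)
  show ?case
  proof (cases "g = []")
    case False
    with Cons.prems have "dpath g (hd g) y" "a < hd g"
      by (auto simp: dpath_Cons_iff up_step_less)
    then have "a \<notin> set g"
      using dpath_subset_Rect by (fastforce simp: Rect_eq_atLeastAtMost)
    with Cons.IH \<open>dpath g (hd g) y\<close> show ?thesis by simp
  qed simp
qed simp

definition lam_weight :: "(pt \<Rightarrow> int) \<Rightarrow> (pt \<Rightarrow> int) \<Rightarrow> (pt \<Rightarrow> nat) \<Rightarrow> pt \<Rightarrow> pt \<Rightarrow> pt \<Rightarrow> int" where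
  "lam_weight wH wV w x y z =
     (if z \<in> Hline x - {x} then wH z else 0) + (if z \<in> Vline x - {x} then wV z else 0) +
     (if z \<in> Rect (padd x eplus) y then int (w z) else 0)"

lemma Tlam_path_eq_sum_lam_weight:
  "Tlam_path wH wV w g x y = (\<Sum>z\<in>set g. lam_weight wH wV w x y z)"
proof -
  have "set g \<inter> Hline x - {x} = set g \<inter> (Hline x - {x})"
    and "set g \<inter> Vline x - {x} = set g \<inter> (Vline x - {x})" by auto
  then show ?thesis
    by (simp add: Tlam_path_def lam_weight_def sum.distrib sum.inter_restrict)
qed

lemma Tlam_path_eq_sum_list:
  assumes "dpath g x y"
  shows "Tlam_path wH wV w g x y = (\<Sum>z\<leftarrow>tl g. lam_weight wH wV w x y z)"
proof -
  obtain h where g: "g = x # h"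
    using assms by (cases g) (auto simp: dpath_def dpath_Cons_iff)
  have "lam_weight wH wV w x y x = 0"
    by (simp add: lam_weight_def Rect_def padd_def eplus_def)
  moreover have "distinct g" using assms by (rule dpath_distinct)
  ultimately show ?thesis
    by (simp add: Tlam_path_eq_sum_lam_weight g sum.distinct_set_conv_list)
qed

lemma lam_weight_up_step:
  assumes stat: "stationary_lpp w L wH wV" and step: "up_step a b"
    and "a \<in> Rect x y" "b \<in> Rect x y"
  shows "lam_weight wH wV w x y b \<le> L b - L a"
    and "lam_weight wH wV w x y b = L b - L a \<longleftrightarrow> (pless x b \<longrightarrow> optimal_step L w a b)"
proof -
  have L: "L b = int (w b) + max (L (psub b e1)) (L (psub b e2))"
    and H: "wH b = L b - L (psub b e1)" and V: "wV b = L b - L (psub b e2)"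
    using stat unfolding stationary_lpp_def by blast+
  from step consider "b = (fst a + 1, snd a)" | "b = (fst a, snd a + 1)"
    by (auto simp: up_step_def padd_def e1_def e2_def)
  then have "lam_weight wH wV w x y b \<le> L b - L a \<and>
    (lam_weight wH wV w x y b = L b - L a \<longleftrightarrow> (pless x b \<longrightarrow> optimal_step L w a b))"
    by cases (use assms L H V in \<open>auto simp: lam_weight_def optimal_step_def pless_def Rect_def
      Hline_def Vline_def padd_def psub_def e1_def e2_def eplus_def\<close>)
  then show "lam_weight wH wV w x y b \<le> L b - L a"
    and "lam_weight wH wV w x y b = L b - L a \<longleftrightarrow> (pless x b \<longrightarrow> optimal_step L w a b)"
    by auto
qed

lemma sum_lam_weight_potential_bound:
  assumes stat: "stationary_lpp w L wH wV"
  shows "dpath g a y \<Longrightarrow> set g \<subseteq> Rect x y \<Longrightarrow>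
    (\<Sum>z\<leftarrow>tl g. lam_weight wH wV w x y z) \<le> L y - L a \<and>
    ((\<Sum>z\<leftarrow>tl g. lam_weight wH wV w x y z) = L y - L a \<longleftrightarrow>
       successively (\<lambda>a b. pless x b \<longrightarrow> optimal_step L w a b) g)"
proof (induction g arbitrary: a)
  case (Cons c h)
  show ?case
  proof (cases "h = []")
    case False
    then obtain b t where h: "h = b # t" by (cases h) auto
    with Cons.prems have "c = a" "up_step a b" "dpath h b y" "a \<in> Rect x y" "b \<in> Rect x y"
      by (auto simp: dpath_Cons_iff)
    with Cons.IH[of b] Cons.prems lam_weight_up_step[OF stat, of a b x y] show ?thesis
      by (auto simp: h)
  qed (use Cons.prems in \<open>simp add: dpath_Cons_iff\<close>)
qed (simp add: dpath_def)

lemma Tlam_path_le_potential: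
  assumes "stationary_lpp w L wH wV" "dpath g x y"
  shows "Tlam_path wH wV w g x y \<le> L y - L x"
  using sum_lam_weight_potential_bound[OF assms(1)] assms(2)
  by (simp add: Tlam_path_eq_sum_list dpath_subset_Rect)

lemma Tlam_path_eq_potential_iff:
  assumes "stationary_lpp w L wH wV" "dpath g x y"
  shows "Tlam_path wH wV w g x y = L y - L x \<longleftrightarrow>
    successively (\<lambda>a b. pless x b \<longrightarrow> optimal_step L w a b) g"
  using sum_lam_weight_potential_bound[OF assms(1)] assms(2)
  by (simp add: Tlam_path_eq_sum_list dpath_subset_Rect)

lemma optimal_predecessor:
  assumes stat: "stationary_lpp w L wH wV" and "x \<le> z" "z \<noteq> x"
  obtains p where "x \<le> p" "up_step p z" "pless x z \<longrightarrow> optimal_step L w p z"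
proof -
  let ?p1 = "psub z e1" and ?p2 = "psub z e2"
  have "L z = int (w z) + max (L ?p1) (L ?p2)"
    using stat unfolding stationary_lpp_def by blast
  then have opt: "optimal_step L w ?p1 z \<or> optimal_step L w ?p2 z"
    by (auto simp: optimal_step_def max_def)
  have up: "up_step ?p1 z" "up_step ?p2 z"
    by (auto simp: up_step_def padd_def psub_def e1_def e2_def)
  from assms(2,3) consider "pless x z" | "fst x = fst z" "snd x < snd z" | "fst x < fst z" "snd x = snd z"
    by (fastforce simp: pless_def less_eq_prod_def prod_eq_iff)
  then show thesis
  proof cases
    case 1
    then have "x \<le> ?p1" "x \<le> ?p2"
      by (auto simp: pless_def less_eq_prod_def psub_def e1_def e2_def)
    with opt up that show thesis by blast
  next
    case 2
    then have "x \<le> ?p2" "\<not> pless x z"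
      by (auto simp: pless_def less_eq_prod_def psub_def e2_def)
    with up that show thesis by blast
  next
    case 3
    then have "x \<le> ?p1" "\<not> pless x z"
      by (auto simp: pless_def less_eq_prod_def psub_def e1_def)
    with up that show thesis by blast
  qed
qed

lemma exists_optimal_dpath:
  assumes stat: "stationary_lpp w L wH wV"
  shows "x \<le> z \<Longrightarrow>
    \<exists>g. dpath g x z \<and> successively (\<lambda>a b. pless x b \<longrightarrow> optimal_step L w a b) g"
proof (induction "nat (fst z - fst x + snd z - snd x)" arbitrary: z rule: less_induct)
  case less
  show ?case
  proof (cases "z = x")
    case False
    then obtain p where p: "x \<le> p" "up_step p z" "pless x z \<longrightarrow> optimal_step L w p z"
      using optimal_predecessor[OF stat less.prems] by blast
    then have "nat (fst p - fst x + snd p - snd x) < nat (fst z - fst x + snd z - snd x)"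
      by (auto simp: up_step_def padd_def e1_def e2_def less_eq_prod_def)
    then obtain g where g: "dpath g x p"
      "successively (\<lambda>a b. pless x b \<longrightarrow> optimal_step L w a b) g"
      using less.hyps p(1) by blast
    have "dpath (g @ [z]) x z"
      using g(1) p(2) by (intro dpath_append) (simp_all add: dpath_Cons_iff)
    moreover have "last g = p" using g(1) by (simp add: dpath_def)
    ultimately show ?thesis
      using g p by (intro exI[of _ "g @ [z]"]) (auto simp: successively_append_iff)
  qed (intro exI[of _ "[x]"], simp add: dpath_def)
qed

lemma lam_geodesic_iff_optimal:
  assumes stat: "stationary_lpp w L wH wV" and "x \<le> y"
  shows "lam_geodesic wH wV w g x y \<longleftrightarrow>
    dpath g x y \<and> successively (\<lambda>a b. pless x b \<longrightarrow> optimal_step L w a b) g"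
proof -
  obtain g0 where "dpath g0 x y" "successively (\<lambda>a b. pless x b \<longrightarrow> optimal_step L w a b) g0"
    using exists_optimal_dpath[OF stat assms(2)] by blast
  then have "Tlam_path wH wV w g0 x y = L y - L x"
    using Tlam_path_eq_potential_iff[OF stat] by blast
  with \<open>dpath g0 x y\<close> show ?thesis
    unfolding lam_geodesic_def
    using Tlam_path_le_potential[OF stat] Tlam_path_eq_potential_iff[OF stat]
    by (metis order.antisym order.refl)
qed

lemma pi_lam_interior_iff:
  assumes stat: "stationary_lpp w L wH wV" and z: "z \<in> Rect (padd x eplus) y"
  shows "z \<in> pi_lam wH wV w x y \<longleftrightarrow> (\<exists>c. dpath c z y \<and> successively (optimal_step L w) c)"
proof -
  let ?P = "\<lambda>a b. pless x b \<longrightarrow> optimal_step L w a b"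
  from z have "pless x z" "x \<le> z" "z \<le> y"
    by (auto simp: Rect_def pless_def less_eq_prod_def padd_def eplus_def)
  then have geo: "lam_geodesic wH wV w g x y \<longleftrightarrow> dpath g x y \<and> successively ?P g" for g
    using lam_geodesic_iff_optimal[OF stat] order.trans by blast
  show ?thesis
  proof
    assume "z \<in> pi_lam wH wV w x y"
    then obtain g where "lam_geodesic wH wV w g x y" "z \<in> set g"
      by (auto simp: pi_lam_def)
    moreover from \<open>z \<in> set g\<close> obtain p s where "g = p @ z # s"
      by (meson split_list)
    ultimately have "dpath (z # s) z y" "successively ?P (z # s)"
      by (auto simp: geo successively_append_iff dest: dpath_suffix)
    moreover have "pless x b" if "b \<in> set (z # s)" for b
      using that dpath_subset_Rect[OF \<open>dpath (z # s) z y\<close>] \<open>pless x z\<close>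
      by (force simp: Rect_eq_atLeastAtMost intro: pless_mono)
    ultimately show "\<exists>c. dpath c z y \<and> successively (optimal_step L w) c"
      by (blast intro: successively_mono)
  next
    assume "\<exists>c. dpath c z y \<and> successively (optimal_step L w) c"
    then obtain s where s: "dpath (z # s) z y" "successively (optimal_step L w) (z # s)"
      by (metis dpath_def list.collapse)
    obtain b where b: "dpath b x z" "successively ?P b"
      using exists_optimal_dpath[OF stat \<open>x \<le> z\<close>] by blast
    have "successively ?P (z # s)"
      using s(2) by (rule successively_mono) simp
    with b have "successively ?P (b @ s)"
      by (cases s) (auto simp: successively_append_iff dpath_def)
    moreover have "dpath (b @ s) x y" using b(1) s(1) by (rule dpath_append)
    moreover have "z \<in> set (b @ s)" using b(1) by (auto simp: dpath_def)
    ultimately show "z \<in> pi_lam wH wV w x y"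
      by (auto simp: pi_lam_def geo)
  qed
qed

theorem lemma3p5:
  fixes w :: "pt \<Rightarrow> nat"
    and L wH wV :: "real \<Rightarrow> pt \<Rightarrow> int"
    and lam :: real and u u' v :: pt
  assumes "0 < lam" and "lam < 1"
    and "stationary_lpp w (L lam) (wH lam) (wV lam)"
    and "pless u v" and "pless u' v"
  shows "pi_lam (wH lam) (wV lam) w u v \<inter> (Rect (padd u eplus) v \<inter> Rect (padd u' eplus) v)
       = pi_lam (wH lam) (wV lam) w u' v \<inter> (Rect (padd u eplus) v \<inter> Rect (padd u' eplus) v)"
  using pi_lam_interior_iff[OF assms(3), of _ u v] pi_lam_interior_iff[OF assms(3), of _ u' v]
  by blast

end
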